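(* Let $m\ge 1$ and $n\ge 0$ be integers. The multiplicity of $-\binom{m}{2}$ as an eigenvalue of ${\rm SR}(m,n)$ is precisely $\binom{n-\binom{m-1}{2}}{m-1}$.
   Context: ${\rm SR}(m,n)$ is the graph whose vertices are the vectors in $\{0,1,2,\dots\}^m$ with coordinate sum $n$, two vertices being adjacent when they differ in precisely two coordinate positions; eigenvalues are those of the adjacency matrix, and the multiplicity of a number that is not an eigenvalue is $0$. The binomial coefficient $\binom{a}{b}$ (for integers $a$ and $b\ge 0$) is taken to be $0$ when $a<b$, including negative $a$; equivalently, $\binom{n-\binom{m-1}{2}}{m-1}$ is the number of vectors in $\{0,1,2,\dots\}^m$ with coordinate sum $n-\binom{m}{2}$. *)

theory Defs
  imports "Jordan_Normal_Form.Char_Poly" "HOL-Library.List_Lexorder"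
begin

definition SR_vertices :: "nat \<Rightarrow> nat \<Rightarrow> nat list set" where
  "SR_vertices m n = {v. length v = m \<and> sum_list v = n}"

definition SR_adj :: "nat list \<Rightarrow> nat list \<Rightarrow> bool" where
  "SR_adj u v = (card {i. i < length u \<and> u ! i \<noteq> v ! i} = 2)"

text \<open>A fixed enumeration of the (finite) vertex set; eigenvalue multiplicities do not depend on it.\<close>
definition SR_vlist :: "nat \<Rightarrow> nat \<Rightarrow> nat list list" where
  "SR_vlist m n = sorted_list_of_set (SR_vertices m n)"

definition SR_adj_matrix :: "nat \<Rightarrow> nat \<Rightarrow> real mat" where
  "SR_adj_matrix m n = (let vs = SR_vlist m n in
     mat (length vs) (length vs) (\<lambda>(i, j). if SR_adj (vs ! i) (vs ! j) then 1 else 0))"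

text \<open>Multiplicity of x as an eigenvalue: multiplicity as a root of the characteristic
  polynomial (0 if x is not an eigenvalue).\<close>
definition eig_mult :: "real mat \<Rightarrow> real \<Rightarrow> nat" where
  "eig_mult A x = order x (char_poly A)"

end

theory Submission
  imports Defs "Jordan_Normal_Form.Jordan_Normal_Form_Existence"
    "Jordan_Normal_Form.Jordan_Normal_Form_Uniqueness"
begin

text \<open>A function on the vertices of SR(m, n) is the coefficient function of a homogeneous
  polynomial \<open>F\<close> of degree \<open>n\<close> in \<open>x\<^sub>0, \<dots>, x\<^sub>m\<^sub>-\<^sub>1\<close>. Two vertices are adjacent
  exactly when they lie on a common line \<open>v + t (e\<^sub>i - e\<^sub>j)\<close>, and a vertex lies on
  \<open>m choose 2\<close> such lines through itself, so \<open>A + (m choose 2) I\<close> is the sum over \<open>i < j\<close>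
  of the line-sum operators \<open>L\<^sub>i\<^sub>j\<close>. Each \<open>L\<^sub>i\<^sub>j\<close> is a sum of all-ones blocks, hence
  positive semidefinite, so the kernel of \<open>A + (m choose 2) I\<close> is the common kernel of the
  \<open>L\<^sub>i\<^sub>j\<close>. Now \<open>L\<^sub>i\<^sub>j F = 0\<close> says that \<open>F\<close> vanishes on \<open>x\<^sub>i = x\<^sub>j\<close>, so the kernel
  consists of the multiples of the Vandermonde product by homogeneous polynomials of degree
  \<open>n - (m choose 2)\<close>; as multiplication by the Vandermonde product is injective, its
  dimension is the number of vertices of SR(m, n - (m choose 2)). Since \<open>A\<close> is symmetric,
  this is also the multiplicity of \<open>-(m choose 2)\<close> as a root of the characteristic
  polynomial.\<close>

section \<open>Multiplicities of eigenvalues of symmetric matrices\<close>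

lemma hermitian_mult_mult_vec_eq_0:
  fixes M :: "complex mat"
  assumes M: "M \<in> carrier_mat N N"
    and herm: "\<And>i j. i < N \<Longrightarrow> j < N \<Longrightarrow> M $$ (i, j) = cnj (M $$ (j, i))"
    and x: "x \<in> carrier_vec N" and MMx: "M *\<^sub>v (M *\<^sub>v x) = 0\<^sub>v N"
  shows "M *\<^sub>v x = 0\<^sub>v N"
proof -
  define y where "y = M *\<^sub>v x"
  have y: "y \<in> carrier_vec N" using M x by (simp add: y_def)
  have My: "(\<Sum>i<N. M $$ (j, i) * y $ i) = 0" if "j < N" for j
    using arg_cong[OF MMx, of "\<lambda>v. v $ j"] M y that
    by (simp add: y_def[symmetric] scalar_prod_def atLeast0LessThan)
  have "y \<bullet>c y = (\<Sum>i<N. \<Sum>j<N. M $$ (i, j) * x $ j * cnj (y $ i))"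
    using M x y by (simp add: y_def scalar_prod_def atLeast0LessThan sum_distrib_right)
  also have "\<dots> = (\<Sum>j<N. x $ j * cnj (\<Sum>i<N. M $$ (j, i) * y $ i))"
  proof (subst sum.swap, intro sum.cong refl)
    fix j assume "j \<in> {..<N}"
    then have "cnj (M $$ (j, i)) = M $$ (i, j)" if "i < N" for i
      using herm[of i j] that by simp
    then show "(\<Sum>i<N. M $$ (i, j) * x $ j * cnj (y $ i)) = x $ j * cnj (\<Sum>i<N. M $$ (j, i) * y $ i)"
      by (simp add: sum_distrib_left mult_ac)
  qed
  also have "\<dots> = 0" by (simp add: My)
  finally show ?thesis using conjugate_square_eq_0_vec[OF y] by (simp add: y_def)
qed

lemma hermitian_mat_kernel_pow:
  fixes M :: "complex mat"
  assumes M: "M \<in> carrier_mat N N"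
    and herm: "\<And>i j. i < N \<Longrightarrow> j < N \<Longrightarrow> M $$ (i, j) = cnj (M $$ (j, i))"
  shows "mat_kernel (M ^\<^sub>m Suc k) = mat_kernel M"
proof (induction k)
  case (Suc k)
  have "v \<in> mat_kernel (M ^\<^sub>m Suc (Suc k)) \<longleftrightarrow> v \<in> mat_kernel M" if v: "v \<in> carrier_vec N" for v
  proof -
    have "(M ^\<^sub>m Suc (Suc k)) *\<^sub>v v = (M ^\<^sub>m Suc k) *\<^sub>v (M *\<^sub>v v)"
      using M v by (simp only: pow_mat.simps(2)) (rule assoc_mult_mat_vec, auto)
    then have "v \<in> mat_kernel (M ^\<^sub>m Suc (Suc k)) \<longleftrightarrow> M *\<^sub>v v \<in> mat_kernel (M ^\<^sub>m Suc k)"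
      using M v by (simp add: mat_kernel_def)
    also have "\<dots> \<longleftrightarrow> M *\<^sub>v v \<in> mat_kernel M" using Suc by simp
    also have "\<dots> \<longleftrightarrow> v \<in> mat_kernel M"
      using hermitian_mult_mult_vec_eq_0[OF M herm v] M v by (auto simp: mat_kernel_def)
    finally show ?thesis .
  qed
  moreover have "mat_kernel (M ^\<^sub>m Suc (Suc k)) \<subseteq> carrier_vec N" "mat_kernel M \<subseteq> carrier_vec N"
    using M by (auto simp: mat_kernel_def)
  ultimately show ?case by blast
qed simp

lemma order_char_poly_hermitian:
  fixes C :: "complex mat"
  assumes C: "C \<in> carrier_mat N N"
    and herm: "\<And>i j. i < N \<Longrightarrow> j < N \<Longrightarrow> C $$ (i, j) = cnj (C $$ (j, i))"
    and real: "cnj e = e"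
  shows "Polynomial.order e (char_poly C) = kernel_dim (char_matrix C e)"
proof -
  define k where "k = Polynomial.order e (char_poly C)"
  obtain n_as where jnf: "jordan_nf C n_as"
    using jordan_nf_exists[OF C] char_poly_factorized[OF C] by blast
  have blocks: "(\<Sum>n\<leftarrow>xs. min (Suc k) n) = sum_list xs" if "\<forall>n\<in>set xs. n \<le> k" for xs
    using that by (induction xs) auto
  have "dim_gen_eigenspace C e (Suc k) = (\<Sum>n\<leftarrow>map fst [(n, a)\<leftarrow>n_as. a = e]. min (Suc k) n)"
    by (rule dim_gen_eigenspace[OF jnf])
  also have "\<dots> = sum_list (map fst [(n, a)\<leftarrow>n_as. a = e])"
    by (rule blocks) (auto dest: jordan_nf_block_size_order_bound[OF jnf] simp: k_def)
  also have "\<dots> = k"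
    unfolding k_def jordan_nf_order[OF jnf, of e] by (simp add: case_prod_beta')
  finally have gen: "dim_gen_eigenspace C e (Suc k) = k" .
  have M: "char_matrix C e \<in> carrier_mat N N" using C by simp
  have "char_matrix C e $$ (i, j) = cnj (char_matrix C e $$ (j, i))" if "i < N" "j < N" for i j
    using herm[OF that] C that real by (auto simp: char_matrix_def)
  from hermitian_mat_kernel_pow[OF M this]
  have "dim_gen_eigenspace C e (Suc k) = kernel_dim (char_matrix C e)"
    using M by (simp add: dim_gen_eigenspace_def kernel_dim_def)
  with gen show ?thesis by (simp add: k_def)
qed

interpretation of_real_poly_hom: map_poly_inj_idom_divide_hom complex_of_real ..

lemma eig_mult_symmetric:
  fixes A :: "real mat"
  assumes A: "A \<in> carrier_mat N N"
    and sym: "\<And>i j. i < N \<Longrightarrow> j < N \<Longrightarrow> A $$ (i, j) = A $$ (j, i)"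
  shows "eig_mult A x = kernel_dim (char_matrix (map_mat complex_of_real A) (complex_of_real x))"
proof -
  have "eig_mult A x = Polynomial.order (complex_of_real x) (char_poly (map_mat complex_of_real A))"
    by (simp add: eig_mult_def of_real_hom.char_poly_hom[OF A] of_real_poly_hom.order_hom)
  also have "\<dots> = kernel_dim (char_matrix (map_mat complex_of_real A) (complex_of_real x))"
    by (rule order_char_poly_hermitian) (use A sym in auto)
  finally show ?thesis .
qed

section \<open>Multiplication by the Vandermonde product\<close>

text \<open>A function \<open>f :: nat list \<Rightarrow> 'a\<close> is read as the coefficient function of the polynomial
  \<open>\<Sum>v. f v x\<^sup>v\<close> in variables \<open>x\<^sub>0, x\<^sub>1, \<dots>\<close>. Then \<open>shift i\<close> is multiplication by
  \<open>x\<^sub>i\<close>, \<open>shift_diff i j\<close> by \<open>x\<^sub>i - x\<^sub>j\<close>, \<open>shift_diff_prod m k\<close> by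
  \<open>\<Prod>i<k. (x\<^sub>i - x\<^sub>m)\<close> and \<open>vandermonde_mult m\<close> by the Vandermonde product
  \<open>\<Prod>i<j<m. (x\<^sub>i - x\<^sub>j)\<close>.\<close>

definition shift :: "nat \<Rightarrow> (nat list \<Rightarrow> 'a::comm_ring_1) \<Rightarrow> nat list \<Rightarrow> 'a" where
  "shift i f v = (if i < length v \<and> 0 < v ! i then f (v[i := v ! i - 1]) else 0)"

definition shift_diff :: "nat \<Rightarrow> nat \<Rightarrow> (nat list \<Rightarrow> 'a::comm_ring_1) \<Rightarrow> nat list \<Rightarrow> 'a" where
  "shift_diff i j f v = shift i f v - shift j f v"

fun shift_diff_prod :: "nat \<Rightarrow> nat \<Rightarrow> (nat list \<Rightarrow> 'a::comm_ring_1) \<Rightarrow> nat list \<Rightarrow> 'a" where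
  "shift_diff_prod m 0 f = f"
| "shift_diff_prod m (Suc k) f = shift_diff k m (shift_diff_prod m k f)"

fun vandermonde_mult :: "nat \<Rightarrow> (nat list \<Rightarrow> 'a::comm_ring_1) \<Rightarrow> nat list \<Rightarrow> 'a" where
  "vandermonde_mult 0 f = f"
| "vandermonde_mult (Suc m) f = vandermonde_mult m (shift_diff_prod m m f)"

lemma shift_diff_prod_closed:
  assumes id: "P (\<lambda>f. f)" and comp: "\<And>S T. P S \<Longrightarrow> P T \<Longrightarrow> P (\<lambda>f. S (T f))"
    and diff: "\<And>i. i < k \<Longrightarrow> P (shift_diff i m)"
  shows "P (shift_diff_prod m k)"
  using diff
proof (induction k)
  case 0
  then show ?case using id by (simp add: fun_eq_iff)
next
  case (Suc k)
  have "shift_diff_prod m (Suc k) = (\<lambda>f. shift_diff k m (shift_diff_prod m k f))" by auto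
  then show ?case using comp[OF Suc.prems Suc.IH] Suc.prems by simp
qed

lemma vandermonde_mult_closed:
  assumes id: "P (\<lambda>f. f)" and comp: "\<And>S T. P S \<Longrightarrow> P T \<Longrightarrow> P (\<lambda>f. S (T f))"
    and diff: "\<And>i j. i < j \<Longrightarrow> j < m \<Longrightarrow> P (shift_diff i j)"
  shows "P (vandermonde_mult m)"
  using diff
proof (induction m)
  case 0
  then show ?case using id by (simp add: fun_eq_iff)
next
  case (Suc m)
  have "vandermonde_mult (Suc m) = (\<lambda>f. vandermonde_mult m (shift_diff_prod m m f))" by auto
  moreover have "P (shift_diff_prod m m)"
  proof (rule shift_diff_prod_closed[where P = P])
    show "P (\<lambda>f. f)" by (fact id)
    show "\<And>S T. P S \<Longrightarrow> P T \<Longrightarrow> P (\<lambda>f. S (T f))" by (fact comp)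
    show "\<And>i. i < m \<Longrightarrow> P (shift_diff i m)" using Suc.prems by simp
  qed
  ultimately show ?case using comp Suc by simp
qed

definition linear_op :: "((nat list \<Rightarrow> 'a::comm_ring_1) \<Rightarrow> nat list \<Rightarrow> 'a) \<Rightarrow> bool" where
  "linear_op T \<longleftrightarrow> (\<forall>f g. T (\<lambda>v. f v + g v) = (\<lambda>v. T f v + T g v)) \<and>
     (\<forall>c f. T (\<lambda>v. c * f v) = (\<lambda>v. c * T f v))"

lemma linear_op_add: "linear_op T \<Longrightarrow> T (\<lambda>v. f v + g v) = (\<lambda>v. T f v + T g v)"
  unfolding linear_op_def by blast

lemma linear_op_scale: "linear_op T \<Longrightarrow> T (\<lambda>v. c * f v) = (\<lambda>v. c * T f v)"
  unfolding linear_op_def by blast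

lemma linear_op_diff: "linear_op T \<Longrightarrow> T (\<lambda>v. f v - g v) = (\<lambda>v. T f v - T g v)"
  using linear_op_add[of T f "\<lambda>v. (- 1) * g v"] linear_op_scale[of T "- 1" g] by simp

lemma linear_op_sum:
  assumes "linear_op T" "finite W"
  shows "T (\<lambda>v. \<Sum>w\<in>W. c w * F w v) = (\<lambda>v. \<Sum>w\<in>W. c w * T (F w) v)"
  using assms(2)
proof (induction W rule: finite_induct)
  case empty
  then show ?case using linear_op_scale[OF assms(1), of 0 "\<lambda>v. 0"] by simp
next
  case (insert x W)
  then show ?case
    using linear_op_add[OF assms(1), of "\<lambda>v. c x * F x v"] linear_op_scale[OF assms(1)] by simp
qed

lemma linear_op_shift_diff: "linear_op (shift_diff i j)"
  by (auto simp: linear_op_def shift_diff_def shift_def algebra_simps)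

lemma linear_op_vandermonde_mult: "linear_op (vandermonde_mult m)"
  by (rule vandermonde_mult_closed[where P = linear_op, OF _ _ linear_op_shift_diff])
    (auto simp: linear_op_def)

definition shift_invariant :: "((nat list \<Rightarrow> 'a::comm_ring_1) \<Rightarrow> nat list \<Rightarrow> 'a) \<Rightarrow> bool" where
  "shift_invariant T \<longleftrightarrow> (\<forall>k f. T (shift k f) = shift k (T f))"

lemma shift_commute: "shift i (shift j f) = shift j (shift i f)"
  by (cases "i = j") (auto simp: shift_def fun_eq_iff nth_list_update list_update_swap)

lemma shift_invariant_shift_diff: "shift_invariant (shift_diff i j)"
proof -
  have "shift k (\<lambda>v. shift i f v - shift j f v) = (\<lambda>v. shift k (shift i f) v - shift k (shift j f) v)"
    for k and f :: "nat list \<Rightarrow> 'a"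
    by (auto simp: shift_def)
  then show ?thesis by (simp add: shift_invariant_def shift_diff_def[abs_def] shift_commute)
qed

lemma shift_invariant_vandermonde_mult: "shift_invariant (vandermonde_mult m)"
  by (rule vandermonde_mult_closed[where P = shift_invariant, OF _ _ shift_invariant_shift_diff])
    (auto simp: shift_invariant_def)

lemma shift_diff_commute:
  assumes "linear_op T" "shift_invariant T"
  shows "T (shift_diff i j f) = shift_diff i j (T f)"
  using linear_op_diff[OF assms(1), of "shift i f" "shift j f"] assms(2)
  by (simp add: shift_diff_def[abs_def] shift_invariant_def)

lemma shift_diff_prod_factor: "i < k \<Longrightarrow> \<exists>G. shift_diff_prod m k f = shift_diff i m G"
proof (induction k)
  case (Suc k)
  show ?case
  proof (cases "i = k")
    case False
    with Suc obtain G where "shift_diff_prod m k f = shift_diff i m G" by auto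
    then have "shift_diff_prod m (Suc k) f = shift_diff i m (shift_diff k m G)"
      by (simp add: shift_diff_commute[OF linear_op_shift_diff shift_invariant_shift_diff])
    then show ?thesis by blast
  qed auto
qed simp

lemma vandermonde_mult_factor: "i < j \<Longrightarrow> j < m \<Longrightarrow> \<exists>G. vandermonde_mult m f = shift_diff i j G"
proof (induction m arbitrary: f)
  case (Suc m)
  show ?case
  proof (cases "j < m")
    case True
    then show ?thesis using Suc.IH[of "shift_diff_prod m m f"] Suc.prems by auto
  next
    case False
    with Suc.prems have "j = m" by simp
    with Suc.prems obtain G where "shift_diff_prod m m f = shift_diff i j G"
      using shift_diff_prod_factor by blast
    then have "vandermonde_mult (Suc m) f = shift_diff i j (vandermonde_mult m G)"
      by (simp add: shift_diff_commute[OF linear_op_vandermonde_mult shift_invariant_vandermonde_mult])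
    then show ?thesis by blast
  qed
qed simp

definition length_local :: "((nat list \<Rightarrow> 'a::comm_ring_1) \<Rightarrow> nat list \<Rightarrow> 'a) \<Rightarrow> bool" where
  "length_local T \<longleftrightarrow>
     (\<forall>F G u. (\<forall>w. length w = length u \<longrightarrow> F w = G w) \<longrightarrow> T F u = T G u)"

lemma length_localD: "length_local T \<Longrightarrow> (\<And>w. length w = length u \<Longrightarrow> F w = G w) \<Longrightarrow> T F u = T G u"
  unfolding length_local_def by blast

lemma length_local_shift_diff: "length_local (shift_diff i j)"
  unfolding length_local_def
proof (intro allI impI)
  fix F G :: "nat list \<Rightarrow> 'a" and u :: "nat list"
  assume "\<forall>w. length w = length u \<longrightarrow> F w = G w"
  then show "shift_diff i j F u = shift_diff i j G u" by (simp add: shift_diff_def shift_def)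
qed

text \<open>\<open>\<lambda>w. g (w @ [0])\<close> is the coefficient function of \<open>g\<close> at \<open>x\<^sub>m = 0\<close>.\<close>
definition commutes_last_zero :: "nat \<Rightarrow> ((nat list \<Rightarrow> 'a::comm_ring_1) \<Rightarrow> nat list \<Rightarrow> 'a) \<Rightarrow> bool" where
  "commutes_last_zero m T \<longleftrightarrow> (\<forall>g u. length u = m \<longrightarrow> T g (u @ [0]) = T (\<lambda>w. g (w @ [0])) u)"

lemma commutes_last_zeroD:
  "commutes_last_zero m T \<Longrightarrow> length u = m \<Longrightarrow> T g (u @ [0]) = T (\<lambda>w. g (w @ [0])) u"
  unfolding commutes_last_zero_def by blast

lemma commutes_last_zero_shift: "i < m \<Longrightarrow> commutes_last_zero m (shift i)"
  unfolding commutes_last_zero_def shift_def by (simp add: nth_append list_update_append)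

lemma commutes_last_zero_shift_diff:
  assumes "i < m" "j < m"
  shows "commutes_last_zero m (shift_diff i j)"
  unfolding commutes_last_zero_def
proof (intro allI impI)
  fix g :: "nat list \<Rightarrow> 'a" and u :: "nat list"
  assume u: "length u = m"
  have "shift k g (u @ [0]) = shift k (\<lambda>w. g (w @ [0])) u" if "k < m" for k
    using commutes_last_zero_shift[OF that] u by (rule commutes_last_zeroD)
  then show "shift_diff i j g (u @ [0]) = shift_diff i j (\<lambda>w. g (w @ [0])) u"
    using assms by (simp add: shift_diff_def)
qed

lemma vandermonde_mult_last_zero:
  "commutes_last_zero m (vandermonde_mult m :: (nat list \<Rightarrow> 'a::comm_ring_1) \<Rightarrow> _) \<and>
    length_local (vandermonde_mult m :: (nat list \<Rightarrow> 'a) \<Rightarrow> _)"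
proof (rule vandermonde_mult_closed[where
    P = "\<lambda>T :: (nat list \<Rightarrow> 'a) \<Rightarrow> nat list \<Rightarrow> 'a. commutes_last_zero m T \<and> length_local T"])
  show "commutes_last_zero m (\<lambda>f. f) \<and> length_local (\<lambda>f. f)"
    by (simp add: commutes_last_zero_def length_local_def)
next
  fix S T :: "(nat list \<Rightarrow> 'a) \<Rightarrow> nat list \<Rightarrow> 'a"
  assume "commutes_last_zero m S \<and> length_local S" "commutes_last_zero m T \<and> length_local T"
  then have S: "commutes_last_zero m S" "length_local S" and T: "commutes_last_zero m T" "length_local T"
    by blast+
  have "S (T g) (u @ [0]) = S (T (\<lambda>w. g (w @ [0]))) u" if u: "length u = m" for g u
  proof -
    have "S (T g) (u @ [0]) = S (\<lambda>w. T g (w @ [0])) u"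
      using S(1) u by (rule commutes_last_zeroD)
    also have "\<dots> = S (T (\<lambda>w. g (w @ [0]))) u"
      by (rule length_localD[OF S(2)], rule commutes_last_zeroD[OF T(1)]) (use u in simp)
    finally show ?thesis .
  qed
  moreover have "length_local (\<lambda>f. S (T f))"
    unfolding length_local_def
  proof (intro allI impI)
    fix F G :: "nat list \<Rightarrow> 'a" and u :: "nat list"
    assume FG: "\<forall>w. length w = length u \<longrightarrow> F w = G w"
    have "T F w = T G w" if "length w = length u" for w
      by (rule length_localD[OF T(2)]) (use FG that in simp)
    then show "S (T F) u = S (T G) u" by (rule length_localD[OF S(2)])
  qed
  ultimately show "commutes_last_zero m (\<lambda>f. S (T f)) \<and> length_local (\<lambda>f. S (T f))"
    unfolding commutes_last_zero_def by blast
next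
  fix i j assume "i < j" "j < m"
  then show "commutes_last_zero m (shift_diff i j) \<and> length_local (shift_diff i j)"
    by (simp add: commutes_last_zero_shift_diff length_local_shift_diff)
qed

fun shift_prefix :: "nat \<Rightarrow> (nat list \<Rightarrow> 'a::comm_ring_1) \<Rightarrow> nat list \<Rightarrow> 'a" where
  "shift_prefix 0 f = f"
| "shift_prefix (Suc k) f = shift k (shift_prefix k f)"

lemma shift_prefix_commute: "shift_invariant T \<Longrightarrow> T (shift_prefix k f) = shift_prefix k (T f)"
  by (induction k) (auto simp: shift_invariant_def)

lemma shift_prefix_map_Suc: "k \<le> length u \<Longrightarrow> shift_prefix k f (map Suc (take k u) @ drop k u) = f u"
proof (induction k)
  case (Suc k)
  define v where "v = map Suc (take (Suc k) u) @ drop (Suc k) u"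
  have "v[k := v ! k - 1] = map Suc (take k u) @ drop k u"
    using Suc.prems by (intro nth_equalityI) (auto simp: v_def nth_append nth_list_update min_def)
  moreover have "k < length v" "v ! k = Suc (u ! k)" using Suc.prems by (auto simp: v_def nth_append)
  ultimately show ?case using Suc by (simp add: shift_def v_def[symmetric])
qed simp

lemma shift_diff_prod_last_zero:
  "length u = m \<Longrightarrow> k \<le> m \<Longrightarrow> shift_diff_prod m k f (u @ [0]) = shift_prefix k (\<lambda>w. f (w @ [0])) u"
proof (induction k arbitrary: u)
  case (Suc k)
  have "shift m (shift_diff_prod m k f) (u @ [0]) = 0" using Suc.prems by (simp add: shift_def nth_append)
  moreover have "shift k (shift_diff_prod m k f) (u @ [0]) = shift k (\<lambda>w. shift_diff_prod m k f (w @ [0])) u"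
    using Suc.prems by (intro commutes_last_zeroD commutes_last_zero_shift) auto
  moreover have "\<dots> = shift k (shift_prefix k (\<lambda>w. f (w @ [0]))) u"
    using Suc by (simp add: shift_def)
  ultimately show ?case by (simp add: shift_diff_def)
qed simp

text \<open>At \<open>x\<^sub>m = 0\<close> the Vandermonde product in \<open>m + 1\<close> variables becomes
  \<open>x\<^sub>0 \<cdots> x\<^sub>m\<^sub>-\<^sub>1\<close> times the one in \<open>m\<close> variables.\<close>
lemma vandermonde_mult_Suc_last_zero:
  assumes "length u = m"
  shows "vandermonde_mult (Suc m) f (map Suc u @ [0]) = vandermonde_mult m (\<lambda>w. f (w @ [0])) u"
proof -
  note last_zero = vandermonde_mult_last_zero[of m, where 'a = 'a]
  have "vandermonde_mult (Suc m) f (map Suc u @ [0]) =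
      vandermonde_mult m (shift_diff_prod m m f) (map Suc u @ [0])"
    by simp
  also have "\<dots> = vandermonde_mult m (\<lambda>w. shift_diff_prod m m f (w @ [0])) (map Suc u)"
    using assms by (intro commutes_last_zeroD[OF conjunct1[OF last_zero]]) simp
  also have "\<dots> = vandermonde_mult m (shift_prefix m (\<lambda>w. f (w @ [0]))) (map Suc u)"
    using assms by (intro length_localD[OF conjunct2[OF last_zero]] shift_diff_prod_last_zero) simp_all
  also have "\<dots> = shift_prefix m (vandermonde_mult m (\<lambda>w. f (w @ [0]))) (map Suc u)"
    by (simp add: shift_prefix_commute[OF shift_invariant_vandermonde_mult])
  also have "\<dots> = vandermonde_mult m (\<lambda>w. f (w @ [0])) u"
    using shift_prefix_map_Suc[of m u] assms by simp
  finally show ?thesis .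
qed

lemma sum_list_update_add:
  "i < length v \<Longrightarrow> sum_list (v[i := a]) + v ! i = sum_list v + (a :: nat)"
  using sum_list_update[of i v a] elem_le_sum_list[of i v] by simp

lemma list_update2_in_SR_vertices:
  assumes "v \<in> SR_vertices m n" "i < m" "j < m" "i \<noteq> j" "a + b = v ! i + v ! j"
  shows "v[i := a, j := b] \<in> SR_vertices m n"
proof -
  have "sum_list (v[i := a]) + v ! i = sum_list v + a"
    using assms by (intro sum_list_update_add) (simp add: SR_vertices_def)
  moreover have "sum_list (v[i := a, j := b]) + v ! j = sum_list (v[i := a]) + b"
    using sum_list_update_add[of j "v[i := a]" b] assms by (simp add: SR_vertices_def)
  ultimately show ?thesis using assms by (simp add: SR_vertices_def)
qed

section \<open>Line sums and divisibility by \<open>x\<^sub>i - x\<^sub>j\<close>\<close>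

text \<open>\<open>line_sum i j f v\<close> sums \<open>f\<close> over the line through \<open>v\<close> in direction
  \<open>e\<^sub>i - e\<^sub>j\<close> inside the vertex set; all of these line sums vanish exactly when
  \<open>x\<^sub>i - x\<^sub>j\<close> divides the polynomial of \<open>f\<close>.\<close>
definition line_sum :: "nat \<Rightarrow> nat \<Rightarrow> (nat list \<Rightarrow> 'a::comm_ring_1) \<Rightarrow> nat list \<Rightarrow> 'a" where
  "line_sum i j f v = (\<Sum>t\<le>v ! i + v ! j. f (v[i := t, j := v ! i + v ! j - t]))"

lemma line_sum_shift_diff:
  assumes "i < j" "j < length v"
  shows "line_sum i j (shift_diff i j g) v = 0"
proof -
  define s where "s = v ! i + v ! j"
  define a where "a t = g (v[i := t, j := s - Suc t])" for t
  have shift_i: "shift i g (v[i := t, j := s - t]) = (if 0 < t then a (t - 1) else 0)" for t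
  proof -
    have "(v[i := t, j := s - t])[i := t - 1] = v[i := t - 1, j := s - Suc (t - 1)]" if "0 < t"
      using assms that by (intro nth_equalityI) (auto simp: nth_list_update)
    then show ?thesis using assms by (simp add: shift_def a_def nth_list_update)
  qed
  have shift_j: "shift j g (v[i := t, j := s - t]) = (if t < s then a t else 0)" for t
    using assms by (simp add: shift_def a_def nth_list_update)
  have "(\<Sum>t\<le>s. if 0 < t then a (t - 1) else 0) = (\<Sum>t<s. a t)"
  proof (cases s)
    case (Suc s')
    then show ?thesis unfolding Suc by (subst sum.atMost_Suc_shift) (simp add: lessThan_Suc_atMost)
  qed simp
  moreover have "(\<Sum>t\<le>s. if t < s then a t else 0) = (\<Sum>t<s. a t)"
    by (simp add: sum.If_cases Int_absorb1 atMost_def lessThan_def)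
      (rule sum.cong, auto)
  ultimately show ?thesis
    by (simp add: line_sum_def shift_diff_def s_def[symmetric] shift_i shift_j sum_subtractf)
qed

definition line_sums_vanish :: "nat \<Rightarrow> nat \<Rightarrow> (nat list \<Rightarrow> 'a::comm_ring_1) \<Rightarrow> bool" where
  "line_sums_vanish m n f \<longleftrightarrow>
     (\<forall>v \<in> SR_vertices m n. \<forall>i j. i < j \<and> j < m \<longrightarrow> line_sum i j f v = 0)"

lemma line_sums_vanish_diff:
  "line_sums_vanish m n f \<Longrightarrow> line_sums_vanish m n g \<Longrightarrow> line_sums_vanish m n (\<lambda>v. f v - g v)"
  by (simp add: line_sums_vanish_def line_sum_def sum_subtractf)

lemma line_sums_vanish_vandermonde_mult: "line_sums_vanish m n (vandermonde_mult m g)"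
  unfolding line_sums_vanish_def
proof (intro ballI allI impI)
  fix v i j assume v: "v \<in> SR_vertices m n" and ij: "i < j \<and> j < m"
  then obtain G where "vandermonde_mult m g = shift_diff i j G" using vandermonde_mult_factor by blast
  then show "line_sum i j (vandermonde_mult m g) v = 0"
    using v ij by (simp add: line_sum_shift_diff SR_vertices_def)
qed

text \<open>The line through a vertex with two zero coordinates is that vertex alone.\<close>
lemma line_sums_vanish_two_zeros:
  assumes K: "line_sums_vanish m n f" and v: "v \<in> SR_vertices m n"
    and ij: "i \<noteq> j" "i < m" "j < m" and zero: "v ! i = 0" "v ! j = 0"
  shows "f v = 0"
proof -
  have "line_sum (min i j) (max i j) f v = 0"
    using K v ij unfolding line_sums_vanish_def by (auto simp: min_def max_def)
  moreover have "v[min i j := 0, max i j := 0] = v"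
    using zero by (simp add: min_def max_def list_update_id[of v i, simplified zero]
        list_update_id[of v j, simplified zero])
  ultimately show ?thesis using zero by (simp add: line_sum_def min_def max_def split: if_splits)
qed

section \<open>Vanishing line sums force divisibility by the Vandermonde product\<close>

text \<open>The two endpoints of a line through \<open>map Suc u @ [0]\<close> have a second zero coordinate;
  the remaining points are the line through \<open>u\<close>, shifted.\<close>
lemma line_sums_vanish_restrict_last_zero:
  assumes K: "line_sums_vanish (Suc m) n f" and mn: "m \<le> n"
  shows "line_sums_vanish m (n - m) (\<lambda>u. f (map Suc u @ [0]))"
  unfolding line_sums_vanish_def
proof (intro ballI allI impI)
  fix u i j assume u: "u \<in> SR_vertices m (n - m)" and ij: "i < j \<and> j < m"
  have lu: "length u = m" and su: "sum_list u = n - m" using u by (auto simp: SR_vertices_def)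
  define v where "v = map Suc u @ [0]"
  have v: "v \<in> SR_vertices (Suc m) n"
    using lu su mn by (simp add: v_def SR_vertices_def sum_list_Suc[of "\<lambda>x. x"])
  have vi: "v ! i = Suc (u ! i)" "v ! j = Suc (u ! j)" "v ! m = 0"
    using ij lu by (auto simp: v_def nth_append)
  have lv: "length v = Suc m" using lu by (simp add: v_def)
  define s where "s = u ! i + u ! j"
  define F where "F t = f (v[i := t, j := Suc (Suc s) - t])" for t
  have "line_sum i j f v = 0" using K v ij unfolding line_sums_vanish_def by simp
  hence LSv: "(\<Sum>t\<le>Suc (Suc s). F t) = 0" unfolding line_sum_def F_def vi s_def by simp
  have F0: "F 0 = 0" unfolding F_def
    by (rule line_sums_vanish_two_zeros[OF K _ _ _ _, of _ i m], rule list_update2_in_SR_vertices[OF v],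
        insert ij vi lu lv, auto simp: s_def nth_list_update)
  have FL: "F (Suc (Suc s)) = 0" unfolding F_def
    by (rule line_sums_vanish_two_zeros[OF K _ _ _ _, of _ j m], rule list_update2_in_SR_vertices[OF v],
        insert ij vi lu lv, auto simp: s_def nth_list_update)
  have "(\<Sum>t\<le>Suc (Suc s). F t) = F 0 + (\<Sum>t\<le>s. F (Suc t)) + F (Suc (Suc s))"
    by (subst sum.atMost_Suc_shift, simp add: sum.atMost_Suc)
  hence S: "(\<Sum>t\<le>s. F (Suc t)) = 0" using LSv F0 FL by simp
  have pt: "F (Suc t) = f (map Suc (u[i := t, j := s - t]) @ [0])" if "t \<le> s" for t
  proof -
    have "v[i := Suc t, j := Suc (Suc s) - Suc t] = map Suc (u[i := t, j := s - t]) @ [0]"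
      using that ij lu by (intro nth_equalityI) (auto simp: v_def nth_append nth_list_update Suc_diff_le)
    thus ?thesis unfolding F_def by simp
  qed
  show "line_sum i j (\<lambda>u. f (map Suc u @ [0])) u = 0"
    unfolding line_sum_def s_def[symmetric] using S pt by simp
qed

text \<open>On a line in direction \<open>e\<^sub>i - e\<^sub>m\<close>, shifting back the last coordinate adds one
  endpoint, which lies on the face \<open>x\<^sub>m = 0\<close> where \<open>g\<close> vanishes.\<close>
lemma line_sum_unshift_last:
  assumes K: "line_sums_vanish (Suc m) (Suc n) g"
    and Z: "\<forall>v\<in>SR_vertices (Suc m) (Suc n). v ! m = 0 \<longrightarrow> g v = 0"
    and v: "v \<in> SR_vertices (Suc m) n" and i: "i < m"
  shows "line_sum i m (\<lambda>v. g (v[m := Suc (v ! m)])) v = 0"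
proof -
  have lv: "length v = Suc m" using v by (simp add: SR_vertices_def)
  define v' where "v' = v[m := Suc (v ! m)]"
  have v': "v' \<in> SR_vertices (Suc m) (Suc n)"
    using v sum_list_update_add[of m v "Suc (v ! m)"] by (auto simp: SR_vertices_def v'_def)
  define s where "s = v ! i + v ! m"
  have eq1: "(v[i := t, m := s - t])[m := Suc (v[i := t, m := s - t] ! m)] = v[i := t, m := Suc (s - t)]"
    for t using lv i by (intro nth_equalityI) (auto simp: nth_list_update)
  have eq2: "v'[i := t, m := x] = v[i := t, m := x]" for t x
    using lv i by (intro nth_equalityI) (auto simp: v'_def nth_list_update)
  have vv: "v' ! i = v ! i" "v' ! m = Suc (v ! m)" using i lv by (auto simp: v'_def)
  have "line_sum i m g v' = 0" using K v' i unfolding line_sums_vanish_def by simp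
  then have sum_Suc: "(\<Sum>t\<le>Suc s. g (v[i := t, m := Suc s - t])) = 0"
    unfolding line_sum_def vv eq2 s_def by simp
  have "v'[i := Suc s, m := 0] \<in> SR_vertices (Suc m) (Suc n)"
    by (rule list_update2_in_SR_vertices[OF v']) (use i vv lv in \<open>auto simp: s_def\<close>)
  then have "g (v[i := Suc s, m := Suc s - Suc s]) = 0"
    using Z i lv eq2 by (simp add: v'_def)
  with sum_Suc have "(\<Sum>t\<le>s. g (v[i := t, m := Suc s - t])) = 0"
    by (simp add: sum.atMost_Suc)
  moreover have "(\<Sum>t\<le>s. g (v[i := t, m := Suc s - t])) = (\<Sum>t\<le>s. g (v[i := t, m := Suc (s - t)]))"
    by (rule sum.cong) (auto simp: Suc_diff_le)
  ultimately show ?thesis unfolding line_sum_def s_def[symmetric] eq1 by simp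
qed

lemma line_sums_vanish_unshift_last:
  assumes K: "line_sums_vanish (Suc m) (Suc n) g"
    and Z: "\<forall>v\<in>SR_vertices (Suc m) (Suc n). v ! m = 0 \<longrightarrow> g v = 0"
  shows "line_sums_vanish (Suc m) n (\<lambda>v. g (v[m := Suc (v ! m)]))"
  unfolding line_sums_vanish_def
proof (intro ballI allI impI)
  fix v i j assume v: "v \<in> SR_vertices (Suc m) n" and ij: "i < j \<and> j < Suc m"
  show "line_sum i j (\<lambda>v. g (v[m := Suc (v ! m)])) v = 0"
  proof (cases "j < m")
    case True
    have lv: "length v = Suc m" using v by (simp add: SR_vertices_def)
    define v' where "v' = v[m := Suc (v ! m)]"
    have v': "v' \<in> SR_vertices (Suc m) (Suc n)"
      using v sum_list_update_add[of m v "Suc (v ! m)"] by (auto simp: SR_vertices_def v'_def)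
    have "(v[i := t, j := x])[m := Suc (v[i := t, j := x] ! m)] = v'[i := t, j := x]" for t x
      using True ij lv by (intro nth_equalityI) (auto simp: v'_def nth_list_update)
    moreover have "v' ! i = v ! i" "v' ! j = v ! j" using True ij lv by (auto simp: v'_def)
    ultimately have "line_sum i j (\<lambda>v. g (v[m := Suc (v ! m)])) v = line_sum i j g v'"
      by (simp add: line_sum_def)
    also have "\<dots> = 0" using K v' ij True unfolding line_sums_vanish_def by simp
    finally show ?thesis .
  next
    case False
    with ij have "j = m" "i < m" by simp_all
    then show ?thesis using line_sum_unshift_last[OF K Z v] by simp
  qed
qed

lemma choose_two_Suc: "Suc m choose 2 = (m choose 2) + m"
  by (simp add: numeral_2_eq_2)

text \<open>The guard compensates for truncated subtraction: there is nothing to count when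
  \<open>n < m choose 2\<close>.\<close>
definition reduced_vertices :: "nat \<Rightarrow> nat \<Rightarrow> nat list set" where
  "reduced_vertices m n = {w \<in> SR_vertices m (n - (m choose 2)). m choose 2 \<le> n}"

definition vandermonde_quotient ::
  "nat \<Rightarrow> nat \<Rightarrow> (nat list \<Rightarrow> 'a::comm_ring_1) \<Rightarrow> (nat list \<Rightarrow> 'a) \<Rightarrow> bool" where
  "vandermonde_quotient m n f h \<longleftrightarrow>
     {w. h w \<noteq> 0} \<subseteq> reduced_vertices m n \<and> (\<forall>v \<in> SR_vertices m n. f v = vandermonde_mult m h v)"

lemma reduced_vertices_snoc_zero:
  "w \<in> reduced_vertices m (n - m) \<Longrightarrow> m \<le> n \<Longrightarrow> w @ [0] \<in> reduced_vertices (Suc m) n"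
  by (auto simp: reduced_vertices_def SR_vertices_def choose_two_Suc)

lemma reduced_vertices_shift:
  assumes "w[k := w ! k - 1] \<in> reduced_vertices m n" "k < length w" "0 < w ! k"
  shows "w \<in> reduced_vertices m (Suc n)"
proof -
  have "sum_list (w[k := w ! k - 1]) + w ! k = sum_list w + (w ! k - 1)"
    using assms(2) by (rule sum_list_update_add)
  then show ?thesis using assms by (auto simp: reduced_vertices_def SR_vertices_def)
qed

lemma vandermonde_quotient_last_zero:
  fixes f :: "nat list \<Rightarrow> 'a::comm_ring_1"
  assumes IH: "\<And>n (f :: nat list \<Rightarrow> 'a). line_sums_vanish m n f \<Longrightarrow> \<exists>h. vandermonde_quotient m n f h"
    and K: "line_sums_vanish (Suc m) n f"
  shows "\<exists>h. {w. h w \<noteq> 0} \<subseteq> reduced_vertices (Suc m) n \<and>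
    (\<forall>v\<in>SR_vertices (Suc m) n. v ! m = 0 \<longrightarrow> f v = vandermonde_mult (Suc m) h v)"
proof -
  obtain h where h_supp: "{w. h w \<noteq> 0} \<subseteq> {w \<in> reduced_vertices m (n - m). m \<le> n}"
    and h_eq: "\<forall>u\<in>SR_vertices m (n - m). m \<le> n \<longrightarrow> f (map Suc u @ [0]) = vandermonde_mult m h u"
  proof (cases "m \<le> n")
    case True
    with IH[OF line_sums_vanish_restrict_last_zero[OF K True]] that show ?thesis
      by (auto simp: vandermonde_quotient_def)
  qed (use that[of "\<lambda>_. 0"] in auto)
  define h' where "h' w = (if w \<noteq> [] \<and> last w = 0 then h (butlast w) else 0)" for w
  have "w \<in> reduced_vertices (Suc m) n" if "h' w \<noteq> 0" for w
  proof -
    from that have "w \<noteq> []" "last w = 0" "h (butlast w) \<noteq> 0"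
      by (auto simp: h'_def split: if_splits)
    moreover from \<open>w \<noteq> []\<close> \<open>last w = 0\<close> have "w = butlast w @ [0]"
      by (metis append_butlast_last_id)
    ultimately show ?thesis using h_supp reduced_vertices_snoc_zero by fastforce
  qed
  moreover have "f v = vandermonde_mult (Suc m) h' v"
    if v: "v \<in> SR_vertices (Suc m) n" and vm: "v ! m = 0" for v
  proof (cases "\<exists>i<m. v ! i = 0")
    case True
    then obtain i where "i < m" "v ! i = 0" by blast
    with v vm show ?thesis
      using line_sums_vanish_two_zeros[OF K v, of i m]
        line_sums_vanish_two_zeros[OF line_sums_vanish_vandermonde_mult v, of i m] by simp
  next
    case False
    define u where "u = map (\<lambda>x. x - 1) (take m v)"
    have lu: "length u = m" using v by (simp add: u_def SR_vertices_def)
    have vu: "v = map Suc u @ [0]"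
      using v vm False by (intro nth_equalityI) (auto simp: u_def nth_append less_Suc_eq SR_vertices_def)
    then have "m \<le> n" "u \<in> SR_vertices m (n - m)"
      using v lu sum_list_Suc[of "\<lambda>x. x" u] by (auto simp: SR_vertices_def)
    then have "f v = vandermonde_mult m h u" using h_eq vu by simp
    also have "h = (\<lambda>w. h' (w @ [0]))" by (simp add: h'_def)
    also have "vandermonde_mult m \<dots> u = vandermonde_mult (Suc m) h' v"
      unfolding vu by (rule vandermonde_mult_Suc_last_zero[OF lu, symmetric])
    finally show ?thesis .
  qed
  ultimately show ?thesis by blast
qed

text \<open>Induction step on the degree: after subtracting the part found on the face
  \<open>x\<^sub>m = 0\<close>, the remainder is \<open>x\<^sub>m\<close> times a function of lower degree.\<close>
lemma vandermonde_quotient_Suc_degree: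
  fixes f :: "nat list \<Rightarrow> 'a::comm_ring_1"
  assumes K: "line_sums_vanish (Suc m) (Suc n) f"
    and h_supp: "{w. h w \<noteq> 0} \<subseteq> reduced_vertices (Suc m) (Suc n)"
    and h_eq: "\<forall>v\<in>SR_vertices (Suc m) (Suc n). v ! m = 0 \<longrightarrow> f v = vandermonde_mult (Suc m) h v"
    and IH: "\<And>g :: nat list \<Rightarrow> 'a. line_sums_vanish (Suc m) n g \<Longrightarrow> \<exists>h. vandermonde_quotient (Suc m) n g h"
  shows "\<exists>h. vandermonde_quotient (Suc m) (Suc n) f h"
proof -
  define g where "g v = f v - vandermonde_mult (Suc m) h v" for v
  have g_zero: "\<forall>v\<in>SR_vertices (Suc m) (Suc n). v ! m = 0 \<longrightarrow> g v = 0"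
    using h_eq by (simp add: g_def)
  have "line_sums_vanish (Suc m) (Suc n) g"
    unfolding g_def by (rule line_sums_vanish_diff[OF K line_sums_vanish_vandermonde_mult])
  from IH[OF line_sums_vanish_unshift_last[OF this g_zero]] obtain h'
    where h'_supp: "{w. h' w \<noteq> 0} \<subseteq> reduced_vertices (Suc m) n"
      and h'_eq: "\<forall>v\<in>SR_vertices (Suc m) n. g (v[m := Suc (v ! m)]) = vandermonde_mult (Suc m) h' v"
    by (auto simp: vandermonde_quotient_def)
  define H where "H w = h w + shift m h' w" for w
  have g_shift: "g v = shift m (vandermonde_mult (Suc m) h') v" if v: "v \<in> SR_vertices (Suc m) (Suc n)" for v
  proof (cases "v ! m = 0")
    case False
    define w where "w = v[m := v ! m - 1]"
    have "w \<in> SR_vertices (Suc m) n"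
      using v False sum_list_update_add[of m v "v ! m - 1"] by (auto simp: SR_vertices_def w_def)
    moreover have "w[m := Suc (w ! m)] = v" using v False by (simp add: w_def SR_vertices_def)
    moreover have "shift m (vandermonde_mult (Suc m) h') v = vandermonde_mult (Suc m) h' w"
      using v False by (simp add: shift_def w_def SR_vertices_def)
    ultimately show ?thesis using h'_eq by metis
  qed (use g_zero v in \<open>simp add: shift_def\<close>)
  have "vandermonde_mult (Suc m) H =
      (\<lambda>v. vandermonde_mult (Suc m) h v + vandermonde_mult (Suc m) (shift m h') v)"
    unfolding H_def[abs_def] by (rule linear_op_add[OF linear_op_vandermonde_mult])
  moreover have "vandermonde_mult (Suc m) (shift m h') = shift m (vandermonde_mult (Suc m) h')"
    using shift_invariant_vandermonde_mult unfolding shift_invariant_def by blast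
  ultimately have "\<forall>v\<in>SR_vertices (Suc m) (Suc n). f v = vandermonde_mult (Suc m) H v"
    using g_shift by (simp add: g_def diff_eq_eq add.commute del: vandermonde_mult.simps)
  moreover have "w \<in> reduced_vertices (Suc m) (Suc n)" if "H w \<noteq> 0" for w
  proof (cases "h w = 0")
    case True
    with that have "m < length w" "0 < w ! m" "h' (w[m := w ! m - 1]) \<noteq> 0"
      by (auto simp: H_def shift_def split: if_splits)
    with h'_supp show ?thesis by (blast intro: reduced_vertices_shift)
  qed (use h_supp in blast)
  ultimately show ?thesis unfolding vandermonde_quotient_def by blast
qed

theorem line_sums_vanish_imp_vandermonde_quotient:
  fixes f :: "nat list \<Rightarrow> 'a::comm_ring_1"
  shows "line_sums_vanish m n f \<Longrightarrow> \<exists>h. vandermonde_quotient m n f h"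
proof (induction m arbitrary: n f)
  case 0
  show ?case
    by (rule exI[of _ "\<lambda>w. if w = [] \<and> n = 0 then f w else 0"])
      (auto simp: vandermonde_quotient_def reduced_vertices_def SR_vertices_def)
next
  case (Suc m)
  note IH_m = Suc.IH
  show ?case using Suc.prems
  proof (induction n arbitrary: f)
    case 0
    have "v ! m = 0" if "v \<in> SR_vertices (Suc m) 0" for v
      using that by (auto simp: SR_vertices_def sum_list_eq_0_iff)
    then show ?case using vandermonde_quotient_last_zero[OF IH_m 0]
      by (auto simp: vandermonde_quotient_def)
  next
    case (Suc n)
    then show ?case
      using vandermonde_quotient_last_zero[OF IH_m Suc.prems]
      by (blast intro: vandermonde_quotient_Suc_degree)
  qed
qed

section \<open>Injectivity of Vandermonde multiplication\<close>

text \<open>The weight has strictly decreasing coefficients, so among the terms of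
  \<open>(x\<^sub>i - x\<^sub>j) g\<close> with \<open>i < j\<close> the one of largest weight is \<open>x\<^sub>i\<close> times the one of
  largest weight of \<open>g\<close>; hence multiplication by the Vandermonde product keeps a nonzero
  term.\<close>
definition weight :: "nat \<Rightarrow> nat list \<Rightarrow> nat" where
  "weight L v = (\<Sum>k<L. v ! k * (L - k))"

lemma weight_update:
  assumes "i < length v"
  shows "weight (length v) (v[i := x]) + v ! i * (length v - i) = weight (length v) v + x * (length v - i)"
proof -
  let ?L = "length v"
  have fin: "finite {..<?L}" by simp
  have i: "i \<in> {..<?L}" using assms by simp
  have A: "weight ?L (v[i := x]) = x * (?L - i) + (\<Sum>k\<in>{..<?L} - {i}. v[i := x] ! k * (?L - k))"
    unfolding weight_def using sum.remove[OF fin i, of "\<lambda>k. v[i := x] ! k * (?L - k)"] assms by simp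
  have B: "weight ?L v = v ! i * (?L - i) + (\<Sum>k\<in>{..<?L} - {i}. v ! k * (?L - k))"
    unfolding weight_def using sum.remove[OF fin i, of "\<lambda>k. v ! k * (?L - k)"] by simp
  have C: "(\<Sum>k\<in>{..<?L} - {i}. v[i := x] ! k * (?L - k)) = (\<Sum>k\<in>{..<?L} - {i}. v ! k * (?L - k))"
    by (rule sum.cong, auto)
  show ?thesis using A B C by simp
qed

lemma weight_dec:
  assumes "i < length v" "v ! i = Suc a"
  shows "weight (length v) (v[i := a]) + (length v - i) = weight (length v) v"
  using weight_update[OF assms(1), of a] assms(2) by simp

lemma weight_inc:
  assumes "i < length v"
  shows "weight (length v) (v[i := Suc (v ! i)]) = weight (length v) v + (length v - i)"
  using weight_update[OF assms(1), of "Suc (v ! i)"] by simp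

definition maximal_support :: "nat \<Rightarrow> (nat list \<Rightarrow> 'a::comm_ring_1) \<Rightarrow> nat list \<Rightarrow> bool" where
  "maximal_support L g w \<longleftrightarrow>
     length w = L \<and> g w \<noteq> 0 \<and> (\<forall>v. length v = L \<and> weight L w < weight L v \<longrightarrow> g v = 0)"

lemma shift_vanishes_above:
  assumes I: "\<forall>v. length v = L \<and> K < weight L v \<longrightarrow> g v = 0" and lv: "length v = L" and i: "i < L"
    and gt: "K + (L - i) < weight L v"
  shows "shift i g v = 0"
proof (cases "0 < v ! i")
  case True
  then obtain a where a: "v ! i = Suc a" by (cases "v ! i") auto
  have "weight L (v[i := a]) + (L - i) = weight L v" using weight_dec[of i v a] lv i a by simp
  hence "K < weight L (v[i := a])" using gt by simp
  hence "g (v[i := a]) = 0" using I lv by simp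
  thus ?thesis using a lv i by (simp add: shift_def)
qed (simp add: shift_def)

lemma maximal_support_shift_diff:
  assumes I: "maximal_support L g w" and ij: "i < j" "j < L"
  shows "maximal_support L (shift_diff i j g) (w[i := Suc (w ! i)])"
proof -
  define w' where "w' = w[i := Suc (w ! i)]"
  have lw: "length w = L" and gw: "g w \<noteq> 0" and up: "\<forall>v. length v = L \<and> weight L w < weight L v \<longrightarrow> g v = 0"
    using I by (auto simp: maximal_support_def)
  have lw': "length w' = L" using lw by (simp add: w'_def)
  have kw': "weight L w' = weight L w + (L - i)" using weight_inc[of i w] lw ij by (simp add: w'_def)
  have c: "L - j < L - i" using ij by simp
  have shi: "shift i g w' = g w"
  proof -
    have "w'[i := w' ! i - 1] = w" using lw ij by (simp add: w'_def)
    moreover have "0 < w' ! i" using lw ij by (simp add: w'_def)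
    ultimately show ?thesis using lw' ij by (simp add: shift_def)
  qed
  have shj: "shift j g w' = 0"
    by (rule shift_vanishes_above[OF up lw'], insert ij kw' c, auto)
  have val: "shift_diff i j g w' \<noteq> 0" using shi shj gw by (simp add: shift_diff_def)
  have above: "shift_diff i j g v = 0" if "length v = L" "weight L w' < weight L v" for v
  proof -
    have "shift i g v = 0" by (rule shift_vanishes_above[OF up that(1)], insert ij that kw', auto)
    moreover have "shift j g v = 0" by (rule shift_vanishes_above[OF up that(1)], insert ij that kw' c, auto)
    ultimately show ?thesis by (simp add: shift_diff_def)
  qed
  show ?thesis unfolding maximal_support_def w'_def[symmetric] using lw' val above by blast
qed

lemma maximal_support_vandermonde_mult:
  assumes "maximal_support L g w" "m \<le> L"
  shows "\<exists>w'. maximal_support L (vandermonde_mult m g) w'"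
proof -
  let ?P = "\<lambda>T :: (nat list \<Rightarrow> 'a) \<Rightarrow> nat list \<Rightarrow> 'a.
    \<forall>g w. maximal_support L g w \<longrightarrow> (\<exists>w'. maximal_support L (T g) w')"
  have "?P (vandermonde_mult m)"
  proof (rule vandermonde_mult_closed[where P = ?P])
    show "\<And>S T. ?P S \<Longrightarrow> ?P T \<Longrightarrow> ?P (\<lambda>f. S (T f))" by blast
    show "\<And>i j. i < j \<Longrightarrow> j < m \<Longrightarrow> ?P (shift_diff i j)"
      using assms(2) maximal_support_shift_diff by fastforce
  qed blast
  with assms(1) show ?thesis by blast
qed

lemma support_shift:
  assumes "{v. g v \<noteq> 0} \<subseteq> SR_vertices L s"
  shows "{v. shift i g v \<noteq> 0} \<subseteq> SR_vertices L (Suc s)"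
proof
  fix v assume "v \<in> {v. shift i g v \<noteq> 0}"
  then have i: "i < length v" "0 < v ! i" and "g (v[i := v ! i - 1]) \<noteq> 0"
    by (auto simp: shift_def split: if_splits)
  with assms have "v[i := v ! i - 1] \<in> SR_vertices L s" by blast
  moreover have "sum_list (v[i := v ! i - 1]) + v ! i = sum_list v + (v ! i - 1)"
    using i(1) by (rule sum_list_update_add)
  ultimately show "v \<in> SR_vertices L (Suc s)" using i by (auto simp: SR_vertices_def)
qed

lemma support_vandermonde_mult:
  assumes "{v. g v \<noteq> 0} \<subseteq> SR_vertices L s"
  shows "{v. vandermonde_mult m g v \<noteq> 0} \<subseteq> SR_vertices L (s + (m choose 2))"
  using assms
proof (induction m arbitrary: s g)
  case 0
  then show ?case by (simp add: numeral_2_eq_2)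
next
  case (Suc m)
  have "{v. shift_diff_prod m k g v \<noteq> 0} \<subseteq> SR_vertices L (s + k)" for k
  proof (induction k)
    case (Suc k)
    have "shift_diff_prod m (Suc k) g v = 0" if "v \<notin> SR_vertices L (s + Suc k)" for v
      using that support_shift[OF Suc.IH, of k] support_shift[OF Suc.IH, of m]
      by (simp add: shift_diff_def subset_iff) (metis mem_Collect_eq)
    then show ?case by blast
  qed (use Suc.prems in simp)
  from Suc.IH[OF this[of m]] show ?case by (simp add: choose_two_Suc ac_simps)
qed

lemma finite_SR_vertices: "finite (SR_vertices m n)"
proof (rule finite_subset)
  show "SR_vertices m n \<subseteq> {xs. set xs \<subseteq> {..n} \<and> length xs = m}"
    by (auto simp: SR_vertices_def member_le_sum_list)
qed (simp add: finite_lists_length_eq)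

lemma vandermonde_mult_injective:
  fixes h :: "nat list \<Rightarrow> 'a::comm_ring_1"
  assumes supp: "{w. h w \<noteq> 0} \<subseteq> SR_vertices m d"
    and zero: "\<forall>v\<in>SR_vertices m (d + (m choose 2)). vandermonde_mult m h v = 0"
  shows "h w = 0"
proof (rule ccontr)
  define S where "S = {w. h w \<noteq> 0}"
  assume "h w \<noteq> 0"
  then have "S \<noteq> {}" "finite S"
    using supp finite_subset[OF supp finite_SR_vertices] by (auto simp: S_def)
  then obtain w' where "w' \<in> S" and top: "\<And>v. v \<in> S \<Longrightarrow> weight m v \<le> weight m w'"
    using Max_in[of "weight m ` S"] Max_ge[of "weight m ` S"] by fastforce
  then have "maximal_support m h w'"
    using supp by (force simp: maximal_support_def S_def SR_vertices_def)
  then obtain w'' where "maximal_support m (vandermonde_mult m h) w''"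
    using maximal_support_vandermonde_mult by blast
  then have "vandermonde_mult m h w'' \<noteq> 0" by (simp add: maximal_support_def)
  moreover from this have "w'' \<in> SR_vertices m (d + (m choose 2))"
    using support_vandermonde_mult[OF supp, of m] by blast
  ultimately show False using zero by simp
qed

section \<open>The adjacency matrix as a sum of line sums\<close>

definition line_key :: "nat \<Rightarrow> nat \<Rightarrow> nat list \<Rightarrow> nat list" where
  "line_key i j u = u[i := 0, j := 0]"

lemma line_key_eq_iff:
  assumes "length u = m" "length v = m" "i < m" "j < m"
  shows "line_key i j u = line_key i j v \<longleftrightarrow> (\<forall>k<m. k \<noteq> i \<and> k \<noteq> j \<longrightarrow> u ! k = v ! k)"
proof
  assume "line_key i j u = line_key i j v"
  thus "\<forall>k<m. k \<noteq> i \<and> k \<noteq> j \<longrightarrow> u ! k = v ! k"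
    unfolding line_key_def by (metis nth_list_update_neq)
next
  assume "\<forall>k<m. k \<noteq> i \<and> k \<noteq> j \<longrightarrow> u ! k = v ! k"
  thus "line_key i j u = line_key i j v" unfolding line_key_def using assms
    by (intro nth_equalityI) (auto simp: nth_list_update)
qed

lemma line_eq_same_key:
  assumes v: "v \<in> SR_vertices m n" and ij: "i < j" "j < m"
  shows "(\<lambda>t. v[i := t, j := v ! i + v ! j - t]) ` {..v ! i + v ! j} =
    {u \<in> SR_vertices m n. line_key i j u = line_key i j v}"
proof -
  define s where "s = v ! i + v ! j"
  have lv: "length v = m" using v by (simp add: SR_vertices_def)
  show ?thesis unfolding s_def[symmetric]
  proof (intro equalityI subsetI)
    fix u assume "u \<in> (\<lambda>t. v[i := t, j := s - t]) ` {..s}"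
    then obtain t where t: "t \<le> s" and u: "u = v[i := t, j := s - t]" by auto
    have "u \<in> SR_vertices m n"
      unfolding u by (rule list_update2_in_SR_vertices[OF v]) (use ij t in \<open>auto simp: s_def\<close>)
    moreover have "line_key i j u = line_key i j v" unfolding u line_key_def using lv ij
      by (intro nth_equalityI) (auto simp: nth_list_update)
    ultimately show "u \<in> {u \<in> SR_vertices m n. line_key i j u = line_key i j v}" by simp
  next
    fix u assume "u \<in> {u \<in> SR_vertices m n. line_key i j u = line_key i j v}"
    hence u: "u \<in> SR_vertices m n" and k: "line_key i j u = line_key i j v" by auto
    have lu: "length u = m" using u by (simp add: SR_vertices_def)
    have agree: "\<forall>k<m. k \<noteq> i \<and> k \<noteq> j \<longrightarrow> u ! k = v ! k" using line_key_eq_iff[OF lu lv] ij k by auto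
    have "sum_list (line_key i j u) + u ! i + u ! j = sum_list u"
    proof -
      have 1: "sum_list (u[i := 0]) + u ! i = sum_list u" using sum_list_update_add[of i u 0] lu ij by simp
      have 2: "sum_list (u[i := 0, j := 0]) + u[i := 0] ! j = sum_list (u[i := 0])"
        using sum_list_update_add[of j "u[i := 0]" 0] lu ij by simp
      show ?thesis using 1 2 ij by (simp add: line_key_def)
    qed
    moreover have "sum_list (line_key i j v) + v ! i + v ! j = sum_list v"
    proof -
      have 1: "sum_list (v[i := 0]) + v ! i = sum_list v" using sum_list_update_add[of i v 0] lv ij by simp
      have 2: "sum_list (v[i := 0, j := 0]) + v[i := 0] ! j = sum_list (v[i := 0])"
        using sum_list_update_add[of j "v[i := 0]" 0] lv ij by simp
      show ?thesis using 1 2 ij by (simp add: line_key_def)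
    qed
    ultimately have sij: "u ! i + u ! j = s" using u v k by (simp add: SR_vertices_def s_def)
    have "u = v[i := u ! i, j := s - u ! i]"
      using lu lv ij agree sij by (intro nth_equalityI) (auto simp: nth_list_update)
    moreover have "u ! i \<le> s" using sij by simp
    ultimately show "u \<in> (\<lambda>t. v[i := t, j := s - t]) ` {..s}" by blast
  qed
qed

lemma line_sum_eq_class_sum:
  assumes v: "v \<in> SR_vertices m n" and ij: "i < j" "j < m"
  shows "line_sum i j f v = (\<Sum>u\<in>{u \<in> SR_vertices m n. line_key i j u = line_key i j v}. f u)"
proof -
  define s where "s = v ! i + v ! j"
  have "inj_on (\<lambda>t. v[i := t, j := s - t]) {..s}"
  proof (rule inj_onI)
    fix t t' assume "v[i := t, j := s - t] = v[i := t', j := s - t']"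
    then have "v[i := t, j := s - t] ! i = v[i := t', j := s - t'] ! i" by simp
    then show "t = t'" using v ij by (simp add: SR_vertices_def)
  qed
  then have "line_sum i j f v = (\<Sum>u\<in>(\<lambda>t. v[i := t, j := s - t]) ` {..s}. f u)"
    by (simp add: line_sum_def s_def sum.reindex)
  also have "\<dots> = (\<Sum>u\<in>{u \<in> SR_vertices m n. line_key i j u = line_key i j v}. f u)"
    using line_eq_same_key[OF v ij] by (simp add: s_def)
  finally show ?thesis .
qed

definition index_pairs :: "nat \<Rightarrow> (nat \<times> nat) set" where
  "index_pairs m = {(i, j). i < j \<and> j < m}"

lemma index_pairs_Suc: "index_pairs (Suc m) = index_pairs m \<union> (\<lambda>i. (i, m)) ` {..<m}"
  unfolding index_pairs_def by (auto simp: less_Suc_eq)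

lemma finite_index_pairs: "finite (index_pairs m)"
  unfolding index_pairs_def by (rule finite_subset[of _ "{..<m} \<times> {..<m}"]) auto

lemma card_index_pairs: "card (index_pairs m) = m choose 2"
proof (induction m)
  case 0 then show ?case by (simp add: index_pairs_def)
next
  case (Suc m)
  have disj: "index_pairs m \<inter> (\<lambda>i. (i, m)) ` {..<m} = {}" unfolding index_pairs_def by auto
  have "card (index_pairs (Suc m)) = card (index_pairs m) + card ((\<lambda>i. (i, m)) ` {..<m})"
    unfolding index_pairs_Suc by (rule card_Un_disjoint[OF finite_index_pairs], auto simp: disj)
  also have "card ((\<lambda>i. (i, m)) ` {..<m}) = m" by (subst card_image) (auto simp: inj_on_def)
  finally show ?case using Suc by (simp add: choose_two_Suc)
qed

lemma SR_vertices_eq_if_agree_but_one: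
  assumes u: "u \<in> SR_vertices m n" and v: "v \<in> SR_vertices m n" and k: "k < m"
    and agree: "\<forall>l<m. l \<noteq> k \<longrightarrow> u ! l = v ! l"
  shows "u ! k = v ! k"
proof -
  have lu: "length u = m" and lv: "length v = m" using u v by (auto simp: SR_vertices_def)
  have "u = v[k := u ! k]" using lu lv agree k by (intro nth_equalityI) (auto simp: nth_list_update)
  hence "sum_list u + v ! k = sum_list v + u ! k" using sum_list_update_add[of k v "u ! k"] lv k by simp
  thus ?thesis using u v by (simp add: SR_vertices_def)
qed

lemma card_index_pairs_same_key:
  assumes u: "u \<in> SR_vertices m n" and v: "v \<in> SR_vertices m n"
  shows "card {p \<in> index_pairs m. line_key (fst p) (snd p) u = line_key (fst p) (snd p) v}
    = (if u = v then m choose 2 else if SR_adj v u then 1 else 0)"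
proof -
  have lu: "length u = m" and lv: "length v = m" using u v by (auto simp: SR_vertices_def)
  define D where "D = {k. k < m \<and> u ! k \<noteq> v ! k}"
  have finD: "finite D" unfolding D_def by simp
  have cond: "line_key i j u = line_key i j v \<longleftrightarrow> D \<subseteq> {i, j}" if "i < m" "j < m" for i j
    using line_key_eq_iff[OF lu lv that] unfolding D_def by auto
  have S: "{p \<in> index_pairs m. line_key (fst p) (snd p) u = line_key (fst p) (snd p) v} =
      {p \<in> index_pairs m. D \<subseteq> {fst p, snd p}}"
    using cond unfolding index_pairs_def by auto
  have adj: "SR_adj v u \<longleftrightarrow> card D = 2"
  proof -
    have "{i. i < length v \<and> v ! i \<noteq> u ! i} = D" unfolding D_def using lv by auto
    thus ?thesis unfolding SR_adj_def by simp
  qed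
  show ?thesis
  proof (cases "u = v")
    case True
    hence "D = {}" unfolding D_def by simp
    hence "{p \<in> index_pairs m. D \<subseteq> {fst p, snd p}} = index_pairs m" by auto
    thus ?thesis using True S card_index_pairs by simp
  next
    case False
    have Dne: "D \<noteq> {}"
    proof
      assume "D = {}"
      hence "u = v" using lu lv unfolding D_def by (intro nth_equalityI) auto
      thus False using False by simp
    qed
    have D1: "card D \<noteq> 1"
    proof
      assume "card D = 1"
      then obtain k where Dk: "D = {k}" by (auto simp: card_Suc_eq)
      hence km: "k < m" and ne: "u ! k \<noteq> v ! k" unfolding D_def by auto
      have "\<forall>l<m. l \<noteq> k \<longrightarrow> u ! l = v ! l" using Dk unfolding D_def by auto
      thus False using SR_vertices_eq_if_agree_but_one[OF u v km] ne by simp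
    qed
    show ?thesis
    proof (cases "card D = 2")
      case True
      then obtain a b where ab: "D = {a, b}" "a < b"
        by (auto simp: card_2_iff) (metis insert_commute linorder_neqE_nat)
      have bm: "b < m" "a < m" using ab unfolding D_def by auto
      have "{p \<in> index_pairs m. D \<subseteq> {fst p, snd p}} = {(a, b)}"
        using ab bm unfolding index_pairs_def by auto
      thus ?thesis using S adj True False by simp
    next
      case c2: False
      have E: "{p \<in> index_pairs m. D \<subseteq> {fst p, snd p}} = {}"
      proof (rule ccontr)
        assume "{p \<in> index_pairs m. D \<subseteq> {fst p, snd p}} \<noteq> {}"
        then obtain i j where "D \<subseteq> {i, j}" by auto
        hence "card D \<le> card {i, j}" by (rule card_mono[rotated]) simp
        also have "\<dots> \<le> 2" by (simp add: card_insert_if)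
        finally have "card D \<le> 2" .
        moreover have "card D \<noteq> 0" using Dne finD by simp
        ultimately show False using D1 c2 by linarith
      qed
      show ?thesis unfolding S E using adj c2 False by simp
    qed
  qed
qed

lemma SR_adj_irrefl: "\<not> SR_adj v v"
  unfolding SR_adj_def by simp

lemma sum_line_sums:
  fixes f :: "nat list \<Rightarrow> 'a::comm_ring_1"
  assumes v: "v \<in> SR_vertices m n"
  shows "(\<Sum>p\<in>index_pairs m. line_sum (fst p) (snd p) f v)
    = of_nat (m choose 2) * f v + (\<Sum>u\<in>SR_vertices m n. if SR_adj v u then f u else 0)"
proof -
  let ?same = "\<lambda>p u. line_key (fst p) (snd p) u = line_key (fst p) (snd p) v"
  have "(\<Sum>p\<in>index_pairs m. line_sum (fst p) (snd p) f v) =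
      (\<Sum>p\<in>index_pairs m. \<Sum>u\<in>SR_vertices m n. if ?same p u then f u else 0)"
    using line_sum_eq_class_sum[OF v] by (intro sum.cong)
      (auto simp: index_pairs_def sum.inter_filter[OF finite_SR_vertices])
  also have "\<dots> = (\<Sum>u\<in>SR_vertices m n. \<Sum>p\<in>index_pairs m. if ?same p u then f u else 0)"
    by (rule sum.swap)
  also have "\<dots> = (\<Sum>u\<in>SR_vertices m n.
      of_nat (if u = v then m choose 2 else if SR_adj v u then 1 else 0) * f u)"
  proof (rule sum.cong[OF refl])
    fix u assume u: "u \<in> SR_vertices m n"
    have "(\<Sum>p\<in>index_pairs m. if ?same p u then f u else 0) =
        of_nat (card {p \<in> index_pairs m. ?same p u}) * f u"
      by (simp add: sum.If_cases finite_index_pairs Int_def conj_commute)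
    then show "(\<Sum>p\<in>index_pairs m. if ?same p u then f u else 0) =
        of_nat (if u = v then m choose 2 else if SR_adj v u then 1 else 0) * f u"
      unfolding card_index_pairs_same_key[OF u v] .
  qed
  also have "\<dots> = (\<Sum>u\<in>SR_vertices m n.
      (if u = v then of_nat (m choose 2) * f u else 0) + (if SR_adj v u then f u else 0))"
    by (rule sum.cong[OF refl]) (auto simp: SR_adj_irrefl)
  also have "\<dots> = of_nat (m choose 2) * f v + (\<Sum>u\<in>SR_vertices m n. if SR_adj v u then f u else 0)"
    using v by (simp add: sum.distrib finite_SR_vertices)
  finally show ?thesis .
qed

lemma line_sum_quadratic_form:
  fixes f :: "nat list \<Rightarrow> complex" and m n i j :: nat
  assumes ij: "i < j" "j < m"
  defines "F k \<equiv> \<Sum>u\<in>{u \<in> SR_vertices m n. line_key i j u = k}. f u"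
  shows "(\<Sum>v\<in>SR_vertices m n. cnj (f v) * line_sum i j f v) =
    of_real (\<Sum>k\<in>line_key i j ` SR_vertices m n. (cmod (F k))\<^sup>2)"
proof -
  have "(\<Sum>v\<in>SR_vertices m n. cnj (f v) * line_sum i j f v) =
      (\<Sum>v\<in>SR_vertices m n. cnj (f v) * F (line_key i j v))"
    using line_sum_eq_class_sum[OF _ ij, where n = n and f = f] by (intro sum.cong refl) (simp add: F_def)
  also have "\<dots> = (\<Sum>k\<in>line_key i j ` SR_vertices m n.
      \<Sum>v\<in>{v \<in> SR_vertices m n. line_key i j v = k}. cnj (f v) * F k)"
    by (subst sum.image_gen[OF finite_SR_vertices]) (auto intro!: sum.cong)
  also have "\<dots> = (\<Sum>k\<in>line_key i j ` SR_vertices m n. cnj (F k) * F k)"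
    by (simp add: F_def sum_distrib_right)
  also have "\<dots> = (\<Sum>k\<in>line_key i j ` SR_vertices m n. complex_of_real ((cmod (F k))\<^sup>2))"
    by (intro sum.cong refl, subst complex_norm_square) (simp add: mult.commute)
  finally show ?thesis by simp
qed

text \<open>Each \<open>line_sum i j\<close> is positive semidefinite, so a vanishing total of the associated
  quadratic forms forces every class sum, and hence every line sum, to vanish.\<close>
lemma line_sums_vanish_if_sum_zero:
  fixes f :: "nat list \<Rightarrow> complex"
  assumes zero: "\<forall>v\<in>SR_vertices m n. (\<Sum>p\<in>index_pairs m. line_sum (fst p) (snd p) f v) = 0"
  shows "line_sums_vanish m n f"
proof -
  define F where "F p k = (\<Sum>u\<in>{u \<in> SR_vertices m n. line_key (fst p) (snd p) u = k}. f u)" for p k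
  define R where "R p = (\<Sum>k\<in>line_key (fst p) (snd p) ` SR_vertices m n. (cmod (F p k))\<^sup>2)" for p
  have "complex_of_real (R p) = (\<Sum>v\<in>SR_vertices m n. cnj (f v) * line_sum (fst p) (snd p) f v)"
    if "p \<in> index_pairs m" for p
    using line_sum_quadratic_form[of "fst p" "snd p" m f n] that
    by (simp add: R_def F_def index_pairs_def case_prod_beta)
  then have "complex_of_real (\<Sum>p\<in>index_pairs m. R p) =
      (\<Sum>p\<in>index_pairs m. \<Sum>v\<in>SR_vertices m n. cnj (f v) * line_sum (fst p) (snd p) f v)"
    by simp
  also have "\<dots> = (\<Sum>v\<in>SR_vertices m n. cnj (f v) * (\<Sum>p\<in>index_pairs m. line_sum (fst p) (snd p) f v))"
    by (subst sum.swap) (simp add: sum_distrib_left)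
  also have "\<dots> = 0" using zero by simp
  finally have "(\<Sum>p\<in>index_pairs m. R p) = 0" by (simp only: of_real_eq_0_iff)
  moreover have "0 \<le> R p" for p by (simp add: R_def sum_nonneg)
  ultimately have "R p = 0" if "p \<in> index_pairs m" for p
    using sum_nonneg_eq_0_iff[OF finite_index_pairs] that by blast
  then have "F (i, j) (line_key i j v) = 0" if "v \<in> SR_vertices m n" "i < j" "j < m" for v i j
    using that finite_SR_vertices
    by (auto simp: R_def index_pairs_def sum_nonneg_eq_0_iff)
  then show ?thesis
    by (auto simp: line_sums_vanish_def line_sum_eq_class_sum F_def)
qed

section \<open>The kernel of \<open>A + (m choose 2) I\<close>\<close>

lemma inj_on_if_coords_indep:
  fixes b :: "'b \<Rightarrow> 'a::field vec"
  assumes fin: "finite W"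
    and indep: "\<And>c w. (\<And>i. i < n \<Longrightarrow> (\<Sum>u\<in>W. c u * b u $ i) = 0) \<Longrightarrow> w \<in> W \<Longrightarrow> c w = 0"
  shows "inj_on b W"
proof (rule inj_onI, rule ccontr)
  fix w w' assume w: "w \<in> W" "w' \<in> W" "b w = b w'" "w \<noteq> w'"
  define c where "c u = (if u = w then 1 else 0) - (if u = w' then 1 else (0 :: 'a))" for u
  have "c u * b u $ i = (if u = w then b u $ i else 0) - (if u = w' then b u $ i else 0)" for u i
    by (simp add: c_def left_diff_distrib)
  then have "(\<Sum>u\<in>W. c u * b u $ i) = 0" for i
    using fin w by (simp add: sum_subtractf)
  from indep[OF this w(1)] w(4) show False by (simp add: c_def)
qed

lemma (in kernel) kernel_dim_eq_card:
  fixes b :: "'b \<Rightarrow> 'a vec"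
  assumes fin: "finite W" and ker: "b ` W \<subseteq> mat_kernel A"
    and indep: "\<And>c w. (\<And>i. i < nc \<Longrightarrow> (\<Sum>u\<in>W. c u * b u $ i) = 0) \<Longrightarrow> w \<in> W \<Longrightarrow> c w = 0"
    and span: "\<And>x. x \<in> mat_kernel A \<Longrightarrow> \<exists>c. \<forall>i<nc. x $ i = (\<Sum>u\<in>W. c u * b u $ i)"
  shows "kernel_dim A = card W"
proof -
  have inj: "inj_on b W" using fin indep by (rule inj_on_if_coords_indep)
  have lin_indpt: "\<not> lin_dep (b ` W)"
  proof
    assume "lin_dep (b ` W)"
    then obtain B a v where B: "finite B" "B \<subseteq> b ` W" and zero: "lincomb a B = 0\<^sub>v nc"
      and "v \<in> B" "a v \<noteq> 0"
      unfolding Ker.lin_dep_def by auto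
    then obtain w where w: "w \<in> W" "b w \<in> B" "a (b w) \<noteq> 0" by auto
    define c where "c u = (if b u \<in> B then a (b u) else 0)" for u
    have B_eq: "b ` {u\<in>W. b u \<in> B} = B" using B by auto
    have "(\<Sum>u\<in>W. c u * b u $ i) = 0" if "i < nc" for i
    proof -
      have "c u * b u $ i = (if b u \<in> B then a (b u) * b u $ i else 0)" for u
        by (simp add: c_def)
      then have "(\<Sum>u\<in>W. c u * b u $ i) = (\<Sum>u\<in>{u\<in>W. b u \<in> B}. a (b u) * b u $ i)"
        using fin by (simp add: sum.inter_filter)
      also have "\<dots> = (\<Sum>y\<in>b ` {u\<in>W. b u \<in> B}. a y * y $ i)"
        by (rule sum.reindex[OF inj_on_subset[OF inj], symmetric, unfolded comp_def]) auto
      also have "\<dots> = (\<Sum>y\<in>B. a y * y $ i)"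
        using B_eq by simp
      also have "\<dots> = lincomb a B $ i" using lincomb_index[OF that] B ker by auto
      finally show ?thesis using zero that by simp
    qed
    from indep[OF this w(1)] w show False by (simp add: c_def)
  qed
  have "mat_kernel A \<subseteq> span (b ` W)"
  proof
    fix x assume x: "x \<in> mat_kernel A"
    obtain c where c: "\<forall>i<nc. x $ i = (\<Sum>u\<in>W. c u * b u $ i)" using span[OF x] by blast
    define a where "a y = c (the_inv_into W b y)" for y
    have "lincomb a (b ` W) = x"
    proof (rule eq_vecI)
      have "lincomb a (b ` W) \<in> mat_kernel A" using ker by (intro Ker.lincomb_closed) auto
      with x show "dim_vec (lincomb a (b ` W)) = dim_vec x"
        using mat_kernelD(1)[OF A] by (metis carrier_vecD)
      fix i assume "i < dim_vec x"
      then have i: "i < nc" using mat_kernelD(1)[OF A x] by simp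
      have "lincomb a (b ` W) $ i = (\<Sum>y\<in>b ` W. a y * y $ i)" using lincomb_index[OF i ker] .
      also have "\<dots> = (\<Sum>u\<in>W. c u * b u $ i)"
        by (simp add: sum.reindex[OF inj] a_def the_inv_into_f_f[OF inj])
      finally show "lincomb a (b ` W) $ i = x $ i" using c i by simp
    qed
    then show "x \<in> span (b ` W)" unfolding Ker.span_def using fin by blast
  qed
  then have "basis (b ` W)"
    using lin_indpt ker Ker.span_is_subset2[OF ker] unfolding Ker.basis_def by blast
  then show ?thesis
    using Ker.dim_basis[of "b ` W"] fin card_image[OF inj] by simp
qed

lemma card_reduced_vertices:
  assumes "m \<ge> 1"
  shows "card (reduced_vertices m n) =
    (if n < ((m - 1) choose 2) then 0 else (n - ((m - 1) choose 2)) choose (m - 1))"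
proof -
  obtain k where m: "m = Suc k" using assms by (cases m) auto
  show ?thesis
  proof (cases "m choose 2 \<le> n")
    case True
    define d where "d = n - (m choose 2)"
    have N: "n - (k choose 2) = d + k" using True m by (simp add: d_def choose_two_Suc)
    have "card (reduced_vertices m n) = (d + k) choose d"
      using True card_length_sum_list[of m d] m by (simp add: reduced_vertices_def SR_vertices_def d_def)
    also have "\<dots> = (d + k) choose k" using binomial_symmetric[of d "d + k"] by simp
    finally show ?thesis using N True m by (simp add: choose_two_Suc)
  next
    case False
    then have "reduced_vertices m n = {}" by (simp add: reduced_vertices_def)
    moreover have "n - (k choose 2) < k" if "\<not> n < k choose 2"
      using False that m by (simp add: choose_two_Suc)
    ultimately show ?thesis using m by simp
  qed
qed

lemma set_SR_vlist: "set (SR_vlist m n) = SR_vertices m n"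
  unfolding SR_vlist_def using finite_SR_vertices by simp

lemma distinct_SR_vlist: "distinct (SR_vlist m n)"
  unfolding SR_vlist_def by simp

lemma SR_adj_sym: "length u = length v \<Longrightarrow> SR_adj u v = SR_adj v u"
proof -
  assume "length u = length v"
  then have "{i. i < length u \<and> u ! i \<noteq> v ! i} = {i. i < length v \<and> v ! i \<noteq> u ! i}" by auto
  then show ?thesis unfolding SR_adj_def by simp
qed

lemma SR_adj_matrix_carrier:
  "SR_adj_matrix m n \<in> carrier_mat (length (SR_vlist m n)) (length (SR_vlist m n))"
  unfolding SR_adj_matrix_def Let_def by simp

lemma SR_adj_matrix_index:
  "a < length (SR_vlist m n) \<Longrightarrow> b < length (SR_vlist m n) \<Longrightarrow>
    SR_adj_matrix m n $$ (a, b) = (if SR_adj (SR_vlist m n ! a) (SR_vlist m n ! b) then 1 else 0)"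
  unfolding SR_adj_matrix_def Let_def by simp

lemma SR_adj_matrix_sym:
  assumes "a < length (SR_vlist m n)" "b < length (SR_vlist m n)"
  shows "SR_adj_matrix m n $$ (a, b) = SR_adj_matrix m n $$ (b, a)"
proof -
  have "SR_vlist m n ! a \<in> SR_vertices m n" "SR_vlist m n ! b \<in> SR_vertices m n"
    using assms set_SR_vlist[of m n] nth_mem by blast+
  then show ?thesis
    using SR_adj_matrix_index[OF assms] SR_adj_matrix_index[OF assms(2,1)] SR_adj_sym
    by (simp add: SR_vertices_def)
qed

definition vec_to_fun :: "nat \<Rightarrow> nat \<Rightarrow> complex vec \<Rightarrow> nat list \<Rightarrow> complex" where
  "vec_to_fun m n x w = (\<Sum>a<length (SR_vlist m n). if SR_vlist m n ! a = w then x $ a else 0)"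

lemma vec_to_fun_nth:
  assumes "a < length (SR_vlist m n)"
  shows "vec_to_fun m n x (SR_vlist m n ! a) = x $ a"
proof -
  have "vec_to_fun m n x (SR_vlist m n ! a) = (\<Sum>a'<length (SR_vlist m n). if a' = a then x $ a' else 0)"
    unfolding vec_to_fun_def using assms distinct_SR_vlist[of m n]
    by (intro sum.cong) (auto simp: nth_eq_iff_index_eq)
  then show ?thesis using assms by simp
qed

lemma vec_to_fun_vec:
  assumes "u \<in> SR_vertices m n"
  shows "vec_to_fun m n (vec (length (SR_vlist m n)) (\<lambda>a. F (SR_vlist m n ! a))) u = F u"
proof -
  from assms obtain a where "a < length (SR_vlist m n)" "u = SR_vlist m n ! a"
    using set_SR_vlist[of m n] by (metis in_set_conv_nth)
  then show ?thesis by (simp add: vec_to_fun_nth)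
qed

definition shifted_adj :: "nat \<Rightarrow> nat \<Rightarrow> complex mat" where
  "shifted_adj m n =
     char_matrix (map_mat complex_of_real (SR_adj_matrix m n)) (complex_of_real (- real (m choose 2)))"

lemma shifted_adj_carrier:
  "shifted_adj m n \<in> carrier_mat (length (SR_vlist m n)) (length (SR_vlist m n))"
  unfolding shifted_adj_def using SR_adj_matrix_carrier by simp

lemma shifted_adj_index:
  "a < length (SR_vlist m n) \<Longrightarrow> b < length (SR_vlist m n) \<Longrightarrow>
    shifted_adj m n $$ (a, b) = (if SR_adj (SR_vlist m n ! a) (SR_vlist m n ! b) then 1 else 0)
      + (if a = b then of_nat (m choose 2) else 0)"
  unfolding shifted_adj_def char_matrix_def
  using SR_adj_matrix_carrier[of m n] SR_adj_matrix_index[of a m n b] by auto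
lemma shifted_adj_mult_vec:
  assumes x: "x \<in> carrier_vec (length (SR_vlist m n))" and a: "a < length (SR_vlist m n)"
  shows "(shifted_adj m n *\<^sub>v x) $ a =
    (\<Sum>p\<in>index_pairs m. line_sum (fst p) (snd p) (vec_to_fun m n x) (SR_vlist m n ! a))"
proof -
  let ?vs = "SR_vlist m n" let ?N = "length ?vs" let ?f = "vec_to_fun m n x"
  have va: "?vs ! a \<in> SR_vertices m n" using a set_SR_vlist[of m n] nth_mem by blast
  have "(shifted_adj m n *\<^sub>v x) $ a = (\<Sum>b<?N. shifted_adj m n $$ (a, b) * x $ b)"
    using shifted_adj_carrier[of m n] x a by (simp add: scalar_prod_def atLeast0LessThan)
  also have "\<dots> = (\<Sum>b<?N. (if SR_adj (?vs ! a) (?vs ! b) then x $ b else 0) +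
      (if a = b then of_nat (m choose 2) * x $ b else 0))"
    by (rule sum.cong[OF refl]) (simp add: shifted_adj_index a distrib_right)
  also have "\<dots> = (\<Sum>b<?N. if SR_adj (?vs ! a) (?vs ! b) then ?f (?vs ! b) else 0) +
      of_nat (m choose 2) * ?f (?vs ! a)"
  proof -
    have "(\<Sum>b<?N. if SR_adj (?vs ! a) (?vs ! b) then x $ b else 0) =
        (\<Sum>b<?N. if SR_adj (?vs ! a) (?vs ! b) then ?f (?vs ! b) else 0)"
      by (rule sum.cong[OF refl]) (simp add: vec_to_fun_nth)
    thus ?thesis using a by (simp add: sum.distrib vec_to_fun_nth)
  qed
  also have "(\<Sum>b<?N. if SR_adj (?vs ! a) (?vs ! b) then ?f (?vs ! b) else 0)
      = (\<Sum>u\<in>SR_vertices m n. if SR_adj (?vs ! a) u then ?f u else 0)"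
    using sum.reindex_bij_betw[OF bij_betw_nth[OF distinct_SR_vlist refl set_SR_vlist[symmetric]],
        of "\<lambda>u. if SR_adj (?vs ! a) u then ?f u else 0"] by (simp add: lessThan_def)
  finally show ?thesis using sum_line_sums[OF va, of ?f] by simp
qed

lemma shifted_adj_kernel_iff:
  assumes x: "x \<in> carrier_vec (length (SR_vlist m n))"
  shows "shifted_adj m n *\<^sub>v x = 0\<^sub>v (length (SR_vlist m n)) \<longleftrightarrow> line_sums_vanish m n (vec_to_fun m n x)"
proof
  assume z: "shifted_adj m n *\<^sub>v x = 0\<^sub>v (length (SR_vlist m n))"
  show "line_sums_vanish m n (vec_to_fun m n x)"
  proof (rule line_sums_vanish_if_sum_zero, intro ballI)
    fix v assume "v \<in> SR_vertices m n"
    then obtain a where a: "a < length (SR_vlist m n)" and va: "v = SR_vlist m n ! a"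
      using set_SR_vlist[of m n] by (metis in_set_conv_nth)
    have "(shifted_adj m n *\<^sub>v x) $ a = 0" using z a by simp
    thus "(\<Sum>p\<in>index_pairs m. line_sum (fst p) (snd p) (vec_to_fun m n x) v) = 0"
      using shifted_adj_mult_vec[OF x a] va by simp
  qed
next
  assume K: "line_sums_vanish m n (vec_to_fun m n x)"
  show "shifted_adj m n *\<^sub>v x = 0\<^sub>v (length (SR_vlist m n))"
  proof (rule eq_vecI)
    fix a assume "a < dim_vec (0\<^sub>v (length (SR_vlist m n)) :: complex vec)"
    hence a: "a < length (SR_vlist m n)" by simp
    have va: "SR_vlist m n ! a \<in> SR_vertices m n" using a set_SR_vlist[of m n] nth_mem by blast
    have "line_sum (fst p) (snd p) (vec_to_fun m n x) (SR_vlist m n ! a) = 0" if "p \<in> index_pairs m" for p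
      using K va that unfolding line_sums_vanish_def index_pairs_def by auto
    thus "(shifted_adj m n *\<^sub>v x) $ a = 0\<^sub>v (length (SR_vlist m n)) $ a"
      using shifted_adj_mult_vec[OF x a] a by simp
  qed (use shifted_adj_carrier[of m n] in auto)
qed

lemma SR_vlist_nth: "i < length (SR_vlist m n) \<Longrightarrow> SR_vlist m n ! i \<in> SR_vertices m n"
  using set_SR_vlist[of m n] nth_mem by blast

lemma SR_vertices_obtain_index:
  assumes "v \<in> SR_vertices m n"
  obtains i where "i < length (SR_vlist m n)" "v = SR_vlist m n ! i"
  using assms set_SR_vlist[of m n] by (metis in_set_conv_nth)

lemma finite_reduced_vertices: "finite (reduced_vertices m n)"
  unfolding reduced_vertices_def using finite_SR_vertices by simp

lemma line_sums_vanish_cong: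
  assumes "\<And>v. v \<in> SR_vertices m n \<Longrightarrow> f v = g v"
  shows "line_sums_vanish m n f \<longleftrightarrow> line_sums_vanish m n g"
proof -
  have "line_sum i j f v = line_sum i j g v" if "v \<in> SR_vertices m n" "i < j" "j < m" for i j v
    unfolding line_sum_eq_class_sum[OF that] using assms by (intro sum.cong) auto
  then show ?thesis unfolding line_sums_vanish_def by auto
qed

lemma vandermonde_mult_sum_indicator:
  assumes "finite W"
  shows "vandermonde_mult m (\<lambda>u. if u \<in> W then c u else 0) v =
    (\<Sum>w\<in>W. c w * vandermonde_mult m (\<lambda>u. if u = w then 1 else 0) v)"
proof -
  have "(\<lambda>u. if u \<in> W then c u else 0) = (\<lambda>u. \<Sum>w\<in>W. c w * (if u = w then 1 else 0))"
    using assms by (intro ext) (simp add: sum.delta' if_distrib[of "\<lambda>x. _ * x"] cong: if_cong)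
  then show ?thesis by (simp add: linear_op_sum[OF linear_op_vandermonde_mult assms])
qed

definition vandermonde_vec :: "nat \<Rightarrow> nat \<Rightarrow> nat list \<Rightarrow> complex vec" where
  "vandermonde_vec m n w = vec (length (SR_vlist m n))
     (\<lambda>i. vandermonde_mult m (\<lambda>u. if u = w then 1 else 0) (SR_vlist m n ! i))"

lemma vandermonde_vec_nth:
  "i < length (SR_vlist m n) \<Longrightarrow>
    vandermonde_vec m n w $ i = vandermonde_mult m (\<lambda>u. if u = w then 1 else 0) (SR_vlist m n ! i)"
  by (simp add: vandermonde_vec_def)

lemma vandermonde_vec_in_kernel: "vandermonde_vec m n w \<in> mat_kernel (shifted_adj m n)"
proof (rule mat_kernelI[OF shifted_adj_carrier])
  show w: "vandermonde_vec m n w \<in> carrier_vec (length (SR_vlist m n))"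
    by (simp add: vandermonde_vec_def)
  have "line_sums_vanish m n (vec_to_fun m n (vandermonde_vec m n w)) \<longleftrightarrow>
      line_sums_vanish m n (vandermonde_mult m (\<lambda>u. if u = w then 1 else 0 :: complex))"
    by (rule line_sums_vanish_cong) (simp add: vandermonde_vec_def vec_to_fun_vec)
  then show "shifted_adj m n *\<^sub>v vandermonde_vec m n w = 0\<^sub>v (length (SR_vlist m n))"
    using shifted_adj_kernel_iff[OF w] line_sums_vanish_vandermonde_mult by blast
qed

lemma vandermonde_vec_indep:
  assumes zero: "\<And>i. i < length (SR_vlist m n) \<Longrightarrow>
      (\<Sum>u\<in>reduced_vertices m n. c u * vandermonde_vec m n u $ i) = 0"
    and w: "w \<in> reduced_vertices m n"
  shows "c w = 0"
proof -
  define h where "h u = (if u \<in> reduced_vertices m n then c u else 0)" for u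
  have "vandermonde_mult m h v = 0" if v: "v \<in> SR_vertices m n" for v
  proof -
    obtain i where i: "i < length (SR_vlist m n)" "v = SR_vlist m n ! i"
      using v by (rule SR_vertices_obtain_index)
    then show ?thesis using zero[OF i(1)]
      unfolding h_def[abs_def] vandermonde_mult_sum_indicator[OF finite_reduced_vertices]
      by (simp add: vandermonde_vec_nth)
  qed
  moreover have C: "m choose 2 \<le> n" using w by (simp add: reduced_vertices_def)
  moreover have "n - (m choose 2) + (m choose 2) = n" using C by simp
  moreover have "{u. h u \<noteq> 0} \<subseteq> SR_vertices m (n - (m choose 2))"
    by (auto simp: h_def reduced_vertices_def)
  ultimately have "h w = 0" using vandermonde_mult_injective[of h m "n - (m choose 2)"] by simp
  then show "c w = 0" using w by (simp add: h_def)
qed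

lemma kernel_spanned_by_vandermonde_vecs:
  assumes x: "x \<in> mat_kernel (shifted_adj m n)"
  shows "\<exists>c. \<forall>i < length (SR_vlist m n).
    x $ i = (\<Sum>u\<in>reduced_vertices m n. c u * vandermonde_vec m n u $ i)"
proof -
  have "line_sums_vanish m n (vec_to_fun m n x)"
    using shifted_adj_kernel_iff mat_kernelD[OF shifted_adj_carrier x] by blast
  then obtain h where "vandermonde_quotient m n (vec_to_fun m n x) h"
    using line_sums_vanish_imp_vandermonde_quotient by blast
  then have supp: "{w. h w \<noteq> 0} \<subseteq> reduced_vertices m n"
    and h: "\<And>v. v \<in> SR_vertices m n \<Longrightarrow> vec_to_fun m n x v = vandermonde_mult m h v"
    unfolding vandermonde_quotient_def by blast+
  have h_eq: "(\<lambda>u. if u \<in> reduced_vertices m n then h u else 0) = h" using supp by fastforce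
  have "x $ i = (\<Sum>u\<in>reduced_vertices m n. h u * vandermonde_vec m n u $ i)"
    if i: "i < length (SR_vlist m n)" for i
  proof -
    have "x $ i = vandermonde_mult m h (SR_vlist m n ! i)"
      using vec_to_fun_nth[OF i, of x] h[OF SR_vlist_nth[OF i]] by simp
    also have "\<dots> = (\<Sum>u\<in>reduced_vertices m n. h u * vandermonde_vec m n u $ i)"
      unfolding vandermonde_vec_nth[OF i]
        vandermonde_mult_sum_indicator[OF finite_reduced_vertices, symmetric] h_eq ..
    finally show ?thesis .
  qed
  then show ?thesis by blast
qed

lemma kernel_dim_shifted_adj: "kernel_dim (shifted_adj m n) = card (reduced_vertices m n)"
proof -
  interpret kernel "length (SR_vlist m n)" "length (SR_vlist m n)" "shifted_adj m n"
    by unfold_locales (rule shifted_adj_carrier)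
  show ?thesis
  proof (rule kernel_dim_eq_card[OF finite_reduced_vertices])
    show "vandermonde_vec m n ` reduced_vertices m n \<subseteq> mat_kernel (shifted_adj m n)"
      using vandermonde_vec_in_kernel by blast
  qed (fact vandermonde_vec_indep kernel_spanned_by_vandermonde_vecs)+
qed

theorem proposition3:
  fixes m n :: nat
  assumes "m \<ge> 1"
  shows "eig_mult (SR_adj_matrix m n) (- real (m choose 2)) =
    (if n < ((m - 1) choose 2) then 0 else (n - ((m - 1) choose 2)) choose (m - 1))"
proof -
  have "eig_mult (SR_adj_matrix m n) (- real (m choose 2)) = kernel_dim (shifted_adj m n)"
    unfolding shifted_adj_def by (rule eig_mult_symmetric[OF SR_adj_matrix_carrier SR_adj_matrix_sym])
  also have "\<dots> = card (reduced_vertices m n)" by (rule kernel_dim_shifted_adj)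
  also have "\<dots> = (if n < ((m - 1) choose 2) then 0 else (n - ((m - 1) choose 2)) choose (m - 1))"
    using assms by (rule card_reduced_vertices)
  finally show ?thesis .
qed

end
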